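(* Let $v \ge 147$ be an integer. Then $\beta(3,v,4) \le v-2$, and \[ \beta(3,v,4) \ge \begin{cases} v-3 & \text{if } v \equiv 0 \text{ or } 1 \pmod 3,\\ v-5 & \text{if } v \equiv 2 \pmod 3. \end{cases} \]
   Context: For integers $v \ge k \ge 2$, a $(v,k)$-packing is a pair $(X,\mathcal{B})$ where $X$ is a set of $v$ points and $\mathcal{B}$ is a set of $k$-subsets of $X$ (blocks) such that every pair of distinct points lies in at most one block. A partial parallel class (PPC) is a set of pairwise disjoint blocks; its size is the number of blocks. A PPC of size $\rho$ is maximum if the packing has no PPC of size $\rho+1$. $\beta(\rho,v,k)$ denotes the maximum number of blocks in a $(v,k)$-packing in which the maximum PPC has size $\rho$. *)

theory Defs
  imports Main
begin

definition is_packing :: "nat \<Rightarrow> nat \<Rightarrow> nat set set \<Rightarrow> bool" where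
  "is_packing v k \<B> \<longleftrightarrow>
     (\<forall>b\<in>\<B>. b \<subseteq> {..<v} \<and> card b = k) \<and>
     (\<forall>x y. x \<noteq> y \<longrightarrow> card {b\<in>\<B>. x \<in> b \<and> y \<in> b} \<le> 1)"

definition is_ppc :: "nat set set \<Rightarrow> nat set set \<Rightarrow> bool" where
  "is_ppc \<B> P \<longleftrightarrow> P \<subseteq> \<B> \<and> pairwise disjnt P"

definition max_ppc_size_is :: "nat set set \<Rightarrow> nat \<Rightarrow> bool" where
  "max_ppc_size_is \<B> \<rho> \<longleftrightarrow>
     (\<exists>P. is_ppc \<B> P \<and> card P = \<rho>) \<and> \<not> (\<exists>P. is_ppc \<B> P \<and> card P = \<rho> + 1)"

definition beta :: "nat \<Rightarrow> nat \<Rightarrow> nat \<Rightarrow> nat" where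
  "beta \<rho> v k = Max {card \<B> | \<B>. is_packing v k \<B> \<and> max_ppc_size_is \<B> \<rho>}"

end

theory Submission
  imports Defs
begin

text \<open>
  In a \<open>(v,4)\<close>-packing every point lies on at most \<open>(v-1)/3\<close> blocks, and when the
  maximum partial parallel class has size 3, no block misses all points of such a class.
  If all degrees are at most 12, the 12 points of a maximum class meet every block, giving at most
  144 blocks. If only one point \<open>p\<close> has degree above 9 (and it exceeds 12), then among the blocks
  missing \<open>p\<close> no three are disjoint, since a block through \<open>p\<close> avoiding them would complete a
  class of size 4; so there are at most \<open>(v-1)/3 + 8\<cdot>9\<close> blocks. If two points \<open>p\<close>, \<open>q\<close> have large
  degree, the blocks missing both pairwise intersect. Pairwise intersecting blocks without a common
  point number at most 16; if instead they share a point \<open>r\<close>, all blocks meet the 3-set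
  \<open>{p, q, r}\<close>, which by double counting allows at most \<open>v - 3\<close> blocks.

  Take three apex points and three layers \<open>\<int>/m\<close>. The \<open>3m\<close> blocks consisting of an
  apex \<open>i\<close> and a line of slope \<open>i\<close> through the layers form a packing in which every block contains
  an apex, so no four blocks are disjoint. For \<open>v \<equiv> 1 (mod 3)\<close> the block formed by the three
  apexes and one new point can be added.
\<close>

section \<open>Packings and partial parallel classes\<close>

definition point_degree :: "nat set set \<Rightarrow> nat \<Rightarrow> nat" where
  "point_degree \<B> p = card {b\<in>\<B>. p \<in> b}"

lemma packing_finite: "is_packing v k \<B> \<Longrightarrow> finite \<B>"
  unfolding is_packing_def by (rule finite_subset[of _ "Pow {..<v}"]) auto

lemma packing_block_subset: "is_packing v k \<B> \<Longrightarrow> b \<in> \<B> \<Longrightarrow> b \<subseteq> {..<v}"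
  unfolding is_packing_def by auto

lemma packing_block_card: "is_packing v k \<B> \<Longrightarrow> b \<in> \<B> \<Longrightarrow> card b = k"
  unfolding is_packing_def by auto

lemma packing_block_finite: "is_packing v k \<B> \<Longrightarrow> b \<in> \<B> \<Longrightarrow> finite b"
  by (meson finite_lessThan finite_subset packing_block_subset)

lemma card_blocks_through_pair_le:
  "is_packing v k \<B> \<Longrightarrow> x \<noteq> y \<Longrightarrow> card {b\<in>\<B>. x \<in> b \<and> y \<in> b} \<le> 1"
  unfolding is_packing_def by auto

lemma packing_block_eq:
  assumes "is_packing v k \<B>" "b \<in> \<B>" "b' \<in> \<B>" "x \<noteq> y" "{x, y} \<subseteq> b" "{x, y} \<subseteq> b'"
  shows "b = b'"
proof -
  have fin: "finite {b\<in>\<B>. x \<in> b \<and> y \<in> b}"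
    using packing_finite[OF assms(1)] by simp
  have "card {b\<in>\<B>. x \<in> b \<and> y \<in> b} \<le> Suc 0"
    using card_blocks_through_pair_le[OF assms(1,4)] by simp
  moreover have "b \<in> {b\<in>\<B>. x \<in> b \<and> y \<in> b}" "b' \<in> {b\<in>\<B>. x \<in> b \<and> y \<in> b}"
    using assms(2,3,5,6) by auto
  ultimately show ?thesis
    using card_le_Suc0_iff_eq[OF fin] by blast
qed

lemma is_packingI:
  assumes "\<And>b. b \<in> \<B> \<Longrightarrow> b \<subseteq> {..<v}" "\<And>b. b \<in> \<B> \<Longrightarrow> card b = k"
    and "\<And>b b' x y. b \<in> \<B> \<Longrightarrow> b' \<in> \<B> \<Longrightarrow> x \<noteq> y \<Longrightarrow> {x, y} \<subseteq> b \<Longrightarrow> {x, y} \<subseteq> b' \<Longrightarrow> b = b'"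
  shows "is_packing v k \<B>"
  unfolding is_packing_def
proof (intro conjI ballI allI impI)
  fix x y :: nat
  assume "x \<noteq> y"
  show "card {b\<in>\<B>. x \<in> b \<and> y \<in> b} \<le> 1"
  proof (cases "\<exists>b\<in>\<B>. x \<in> b \<and> y \<in> b")
    case True
    then obtain b where b: "b \<in> \<B>" "x \<in> b" "y \<in> b" by blast
    have "b' = b" if "b' \<in> \<B>" "x \<in> b'" "y \<in> b'" for b'
      using assms(3)[OF that(1) b(1) \<open>x \<noteq> y\<close>] that b by simp
    then have "{b\<in>\<B>. x \<in> b \<and> y \<in> b} = {b}"
      using b by blast
    then show ?thesis by simp
  next
    case False
    then have "{b\<in>\<B>. x \<in> b \<and> y \<in> b} = {}" by blast
    then show ?thesis by (simp only: card.empty)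
  qed
qed (use assms(1,2) in auto)

lemma is_packing_subset:
  assumes "is_packing v k \<B>" "\<B>' \<subseteq> \<B>"
  shows "is_packing v k \<B>'"
proof (rule is_packingI)
  fix b b' x y
  assume "b \<in> \<B>'" "b' \<in> \<B>'" "x \<noteq> y" "{x, y} \<subseteq> b" "{x, y} \<subseteq> b'"
  then show "b = b'"
    using assms(2) packing_block_eq[OF assms(1)] by (metis subsetD)
qed (use assms packing_block_subset[OF assms(1)] packing_block_card[OF assms(1)] in auto)

lemma card_Union_blocks_le:
  assumes "is_packing v k \<B>" "Q \<subseteq> \<B>"
  shows "card (\<Union>Q) \<le> k * card Q"
proof -
  have "card (\<Union>Q) \<le> sum card Q" by (rule card_Union_le_sum_card)
  also have "\<dots> = (\<Sum>b\<in>Q. k)"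
    using assms packing_block_card by (intro sum.cong) auto
  finally show ?thesis by (simp add: mult.commute)
qed

lemma finite_Union_blocks: "is_packing v k \<B> \<Longrightarrow> Q \<subseteq> \<B> \<Longrightarrow> finite (\<Union>Q)"
  using packing_finite packing_block_finite by (meson finite_Union finite_subset subsetD)

lemma card_le_sum_point_degree:
  assumes "finite \<B>" "finite H" "\<forall>b\<in>\<B>. b \<inter> H \<noteq> {}"
  shows "card \<B> \<le> (\<Sum>h\<in>H. point_degree \<B> h)"
proof -
  have "\<B> \<subseteq> (\<Union>h\<in>H. {b\<in>\<B>. h \<in> b})"
    using assms(3) by blast
  then have "card \<B> \<le> card (\<Union>h\<in>H. {b\<in>\<B>. h \<in> b})"
    using assms(1,2) by (intro card_mono) auto
  also have "\<dots> \<le> (\<Sum>h\<in>H. point_degree \<B> h)"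
    unfolding point_degree_def by (rule card_UN_le[OF assms(2)])
  finally show ?thesis .
qed

lemma ex_block_through_avoiding:
  assumes "is_packing v k \<B>" "finite X" "p \<notin> X" "card X < point_degree \<B> p"
  shows "\<exists>b\<in>\<B>. p \<in> b \<and> b \<inter> X = {}"
proof (rule ccontr)
  assume "\<not> ?thesis"
  then have "point_degree \<B> p \<le> card (\<Union>x\<in>X. {b\<in>\<B>. p \<in> b \<and> x \<in> b})"
    unfolding point_degree_def using packing_finite[OF assms(1)] assms(2)
    by (intro card_mono) auto
  also have "\<dots> \<le> (\<Sum>x\<in>X. card {b\<in>\<B>. p \<in> b \<and> x \<in> b})"
    by (rule card_UN_le[OF assms(2)])
  also have "\<dots> \<le> (\<Sum>x\<in>X. 1)"
    using assms(3) by (intro sum_mono card_blocks_through_pair_le[OF assms(1)]) auto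
  finally show False using assms(4) by simp
qed

lemma sum_card_Diff_blocks_through_le:
  assumes "is_packing v k \<B>" "p \<in> T"
  shows "(\<Sum>b\<in>{b\<in>\<B>. p \<in> b}. card (b - T)) \<le> card ({..<v} - T)"
proof -
  have "(\<Sum>b\<in>{b\<in>\<B>. p \<in> b}. card (b - T)) = card (\<Union>b\<in>{b\<in>\<B>. p \<in> b}. b - T)"
  proof (rule card_UN_disjoint[symmetric])
    show "finite {b\<in>\<B>. p \<in> b}"
      using packing_finite[OF assms(1)] by simp
    show "\<forall>b\<in>{b\<in>\<B>. p \<in> b}. finite (b - T)"
      using packing_block_finite[OF assms(1)] by blast
    show "\<forall>b\<in>{b\<in>\<B>. p \<in> b}. \<forall>b'\<in>{b\<in>\<B>. p \<in> b}. b \<noteq> b' \<longrightarrow> (b - T) \<inter> (b' - T) = {}"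
    proof (intro ballI impI equals0I)
      fix b b' x
      assume "b \<in> {b\<in>\<B>. p \<in> b}" "b' \<in> {b\<in>\<B>. p \<in> b}" "b \<noteq> b'" "x \<in> (b - T) \<inter> (b' - T)"
      moreover have "x \<noteq> p" using \<open>x \<in> (b - T) \<inter> (b' - T)\<close> assms(2) by blast
      ultimately show False
        using packing_block_eq[OF assms(1), of b b' x p] by simp
    qed
  qed
  also have "\<dots> \<le> card ({..<v} - T)"
    using packing_block_subset[OF assms(1)] by (intro card_mono) auto
  finally show ?thesis .
qed

lemma point_degree_eq_0: "is_packing v k \<B> \<Longrightarrow> v \<le> p \<Longrightarrow> point_degree \<B> p = 0"
proof -
  assume "is_packing v k \<B>" "v \<le> p"
  then have "{b\<in>\<B>. p \<in> b} = {}"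
    using packing_block_subset by fastforce
  then show ?thesis unfolding point_degree_def by (simp only: card.empty)
qed

lemma point_degree_bound:
  assumes "is_packing v k \<B>"
  shows "(k - 1) * point_degree \<B> p \<le> v - 1"
proof (cases "p < v")
  case True
  have "(k - 1) * point_degree \<B> p = (\<Sum>b\<in>{b\<in>\<B>. p \<in> b}. card (b - {p}))"
    unfolding point_degree_def
    using packing_block_card[OF assms] packing_block_finite[OF assms] by simp
  also have "\<dots> \<le> v - 1"
    using sum_card_Diff_blocks_through_le[OF assms, of p "{p}"] True by simp
  finally show ?thesis .
qed (simp add: point_degree_eq_0[OF assms])

lemma is_ppc_subset: "is_ppc \<B> P \<Longrightarrow> P' \<subseteq> P \<Longrightarrow> is_ppc \<B> P'"
  unfolding is_ppc_def using pairwise_subset by blast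

lemma is_ppc_insert:
  assumes "is_ppc \<B> P" "b \<in> \<B>" "b \<inter> \<Union>P = {}"
  shows "is_ppc \<B> (insert b P)"
  using assms unfolding is_ppc_def pairwise_insert disjnt_def by blast

lemma card_insert_disjoint_block:
  assumes "finite P" "b \<noteq> {}" "b \<inter> \<Union>P = {}"
  shows "card (insert b P) = Suc (card P)"
proof -
  have "b \<notin> P" using assms(2,3) by blast
  then show ?thesis using assms(1) by simp
qed

lemma max_ppc_size_is_card_le:
  assumes "max_ppc_size_is \<B> \<rho>" "is_ppc \<B> P" "finite P"
  shows "card P \<le> \<rho>"
proof (rule ccontr)
  assume "\<not> card P \<le> \<rho>"
  then obtain P' where "P' \<subseteq> P" "card P' = \<rho> + 1"
    using obtain_subset_with_card_n[of "\<rho> + 1" P] by auto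
  then show False
    using assms(1) is_ppc_subset[OF assms(2)] unfolding max_ppc_size_is_def by blast
qed

lemma ex_max_ppc_size_is:
  assumes "finite \<B>"
  shows "\<exists>\<rho>. max_ppc_size_is \<B> \<rho>"
proof -
  define S where "S = {s. \<exists>P. is_ppc \<B> P \<and> card P = s}"
  have "S \<subseteq> {..card \<B>}"
    unfolding S_def is_ppc_def using assms by (auto intro: card_mono)
  then have "finite S" by (rule finite_subset) simp
  moreover have "0 \<in> S"
    unfolding S_def is_ppc_def by (intro CollectI exI[of _ "{}"]) simp
  ultimately have "Max S \<in> S" "Max S + 1 \<notin> S"
    by (auto intro: Max_in dest: Max_ge)
  then show ?thesis
    unfolding max_ppc_size_is_def S_def by blast
qed

lemma block_meets_Union_max_ppc:
  assumes "is_packing v k \<B>" "0 < k" "max_ppc_size_is \<B> \<rho>" "is_ppc \<B> P" "card P = \<rho>" "b \<in> \<B>"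
  shows "b \<inter> \<Union>P \<noteq> {}"
proof
  assume disj: "b \<inter> \<Union>P = {}"
  have "finite P"
    using assms(4) packing_finite[OF assms(1)] unfolding is_ppc_def by (blast intro: finite_subset)
  moreover have "b \<noteq> {}"
    using packing_block_card[OF assms(1,6)] assms(2) by auto
  ultimately have "card (insert b P) = Suc \<rho>"
    using card_insert_disjoint_block[OF _ _ disj] assms(5) by simp
  moreover have "is_ppc \<B> (insert b P)"
    using is_ppc_insert[OF assms(4,6) disj] .
  ultimately show False
    using max_ppc_size_is_card_le[OF assms(3)] \<open>finite P\<close> by fastforce
qed

lemma card_le_if_pairwise_disjnt_meet:
  assumes "finite H" "pairwise disjnt P" "\<And>b. b \<in> P \<Longrightarrow> b \<inter> H \<noteq> {}"
  shows "card P \<le> card H"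
proof (rule card_le_if_inj_on_rel[where r = "\<lambda>b h. h \<in> b", OF assms(1)])
  show "\<exists>h. h \<in> H \<and> h \<in> b" if "b \<in> P" for b
    using assms(3)[OF that] by blast
  show "b = b'" if "b \<in> P" "b' \<in> P" "h \<in> b" "h \<in> b'" for b b' h
    using that assms(2) unfolding pairwise_def disjnt_def by blast
qed

lemma finite_beta_candidates: "finite {card \<B> | \<B>. is_packing v k \<B> \<and> max_ppc_size_is \<B> \<rho>}"
proof -
  have "{card \<B> | \<B>. is_packing v k \<B> \<and> max_ppc_size_is \<B> \<rho>} \<subseteq> card ` Pow (Pow {..<v})"
    unfolding is_packing_def by auto
  then show ?thesis by (rule finite_subset) simp
qed

lemma card_le_beta: "is_packing v k \<B> \<Longrightarrow> max_ppc_size_is \<B> \<rho> \<Longrightarrow> card \<B> \<le> beta \<rho> v k"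
  unfolding beta_def by (rule Max_ge[OF finite_beta_candidates]) blast

lemma beta_le:
  assumes "is_packing v k \<B>\<^sub>0" "max_ppc_size_is \<B>\<^sub>0 \<rho>"
    and "\<And>\<B>. is_packing v k \<B> \<Longrightarrow> max_ppc_size_is \<B> \<rho> \<Longrightarrow> card \<B> \<le> n"
  shows "beta \<rho> v k \<le> n"
  unfolding beta_def using assms by (intro Max.boundedI[OF finite_beta_candidates]) auto

section \<open>The upper bound\<close>

text \<open>Every block meets the at most \<open>k \<rho>\<close> points covered by a maximum partial parallel class.\<close>
lemma card_le_max_ppc_size_degree:
  assumes "is_packing v k \<B>" "0 < k" "max_ppc_size_is \<B> \<rho>" "\<And>p. point_degree \<B> p \<le> d"
  shows "card \<B> \<le> k * \<rho> * d"
proof -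
  obtain P where P: "is_ppc \<B> P" "card P = \<rho>"
    using assms(3) unfolding max_ppc_size_is_def by blast
  have PB: "P \<subseteq> \<B>" using P(1) unfolding is_ppc_def by simp
  have "finite (\<Union>P)" by (rule finite_Union_blocks[OF assms(1) PB])
  then have "card \<B> \<le> (\<Sum>h\<in>\<Union>P. point_degree \<B> h)"
    using card_le_sum_point_degree packing_finite[OF assms(1)]
      block_meets_Union_max_ppc[OF assms(1-3) P] by blast
  also have "\<dots> \<le> card (\<Union>P) * d"
    using sum_bounded_above[of "\<Union>P" "point_degree \<B>" d] assms(4) by simp
  also have "\<dots> \<le> k * \<rho> * d"
    using card_Union_blocks_le[OF assms(1) PB] P(2) by simp
  finally show ?thesis .
qed

lemma card_ppc_avoiding_heavy_point_less:
  assumes pk: "is_packing v k \<B>" and max: "max_ppc_size_is \<B> \<rho>"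
    and heavy: "k * \<rho> < point_degree \<B> p" and P: "is_ppc {b\<in>\<B>. p \<notin> b} P"
  shows "card P < \<rho>"
proof (rule ccontr)
  assume "\<not> card P < \<rho>"
  then obtain P' where P': "P' \<subseteq> P" "card P' = \<rho>"
    using obtain_subset_with_card_n[of \<rho> P] by auto
  have P'B: "P' \<subseteq> {b\<in>\<B>. p \<notin> b}" "is_ppc \<B> P'"
    using P P' unfolding is_ppc_def by (auto intro: pairwise_subset)
  have "finite (\<Union>P')" "card (\<Union>P') \<le> k * \<rho>"
    using finite_Union_blocks[OF pk] card_Union_blocks_le[OF pk] P'B(1) P'(2) by auto
  moreover have "p \<notin> \<Union>P'" using P'B(1) by blast
  ultimately obtain D where D: "D \<in> \<B>" "p \<in> D" "D \<inter> \<Union>P' = {}"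
    using ex_block_through_avoiding[OF pk] heavy by (meson le_less_trans)
  have "finite P'"
    using P'B(1) packing_finite[OF pk] by (auto intro: finite_subset)
  then have "card (insert D P') = Suc \<rho>"
    using card_insert_disjoint_block D P'(2) by auto
  moreover have "is_ppc \<B> (insert D P')"
    using is_ppc_insert[OF P'B(2) D(1,3)] .
  ultimately show False
    using max_ppc_size_is_card_le[OF max] finite_insert \<open>finite P'\<close> by fastforce
qed

text \<open>The blocks missing \<open>p\<close> have maximum partial parallel classes of size less than \<open>\<rho>\<close>.\<close>
lemma card_le_if_one_heavy_point:
  assumes pk: "is_packing v k \<B>" and "0 < k" and max: "max_ppc_size_is \<B> \<rho>"
    and heavy: "k * \<rho> < point_degree \<B> p" and light: "\<And>q. q \<noteq> p \<Longrightarrow> point_degree \<B> q \<le> d"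
  shows "card \<B> \<le> point_degree \<B> p + k * (\<rho> - 1) * d"
proof -
  define \<B>' where "\<B>' = {b\<in>\<B>. p \<notin> b}"
  have pk': "is_packing v k \<B>'"
    unfolding \<B>'_def by (rule is_packing_subset[OF pk]) auto
  obtain \<rho>' where max': "max_ppc_size_is \<B>' \<rho>'"
    using ex_max_ppc_size_is[OF packing_finite[OF pk']] by blast
  have "\<rho>' < \<rho>"
    using max' card_ppc_avoiding_heavy_point_less[OF pk max heavy]
    unfolding max_ppc_size_is_def \<B>'_def by blast
  have "point_degree \<B>' q \<le> d" for q
  proof (cases "q = p")
    case True
    then show ?thesis unfolding point_degree_def \<B>'_def by simp
  next
    case False
    have "point_degree \<B>' q \<le> point_degree \<B> q"
      unfolding point_degree_def \<B>'_def using packing_finite[OF pk] by (intro card_mono) auto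
    then show ?thesis using light[OF False] by simp
  qed
  then have "card \<B>' \<le> k * \<rho>' * d"
    by (rule card_le_max_ppc_size_degree[OF pk' \<open>0 < k\<close> max'])
  also have "\<dots> \<le> k * (\<rho> - 1) * d"
    using \<open>\<rho>' < \<rho>\<close> by (intro mult_le_mono) auto
  finally have "card \<B>' \<le> k * (\<rho> - 1) * d" .
  moreover have "card \<B> \<le> point_degree \<B> p + card \<B>'"
  proof -
    have "\<B> = {b\<in>\<B>. p \<in> b} \<union> \<B>'" unfolding \<B>'_def by auto
    then show ?thesis unfolding point_degree_def by (metis card_Un_le)
  qed
  ultimately show ?thesis by simp
qed

text \<open>Two disjoint blocks missing \<open>p\<close> and \<open>q\<close> would extend, first by a block through \<open>q\<close> and
  then by one through \<open>p\<close>, to four pairwise disjoint blocks.\<close>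
lemma blocks_avoiding_heavy_points_intersect:
  assumes pk: "is_packing v k \<B>" and "0 < k" and max: "max_ppc_size_is \<B> 3" and "p \<noteq> q"
    and heavy: "3 * k < point_degree \<B> p" "2 * k + 1 < point_degree \<B> q"
    and b: "b \<in> \<B>" "p \<notin> b" "q \<notin> b" and b': "b' \<in> \<B>" "p \<notin> b'" "q \<notin> b'"
  shows "b \<inter> b' \<noteq> {}"
proof
  assume disj: "b \<inter> b' = {}"
  have nonempty: "c \<noteq> {}" if "c \<in> \<B>" for c
    using packing_block_card[OF pk that] \<open>0 < k\<close> by auto
  define P2 where "P2 = {b, b'}"
  have "b \<noteq> b'" using disj nonempty[OF b(1)] by auto
  then have P2: "is_ppc \<B> P2" "card P2 = 2" "\<Union>P2 = b \<union> b'"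
    unfolding P2_def is_ppc_def pairwise_insert disjnt_def
    using b(1) b'(1) disj by (auto simp: Int_commute)
  define X1 where "X1 = insert p (b \<union> b')"
  have "finite X1" "card X1 \<le> 2 * k + 1"
    unfolding X1_def using finite_Union_blocks[OF pk, of P2] card_Union_blocks_le[OF pk, of P2] P2
    by (auto simp: P2_def b(1) b'(1) card_insert_if)
  moreover have "q \<notin> X1" unfolding X1_def using \<open>p \<noteq> q\<close> b b' by auto
  ultimately obtain D1 where D1: "D1 \<in> \<B>" "q \<in> D1" "D1 \<inter> X1 = {}"
    using ex_block_through_avoiding[OF pk] heavy(2) by (meson le_less_trans)
  define P3 where "P3 = insert D1 P2"
  have P3: "is_ppc \<B> P3" "card P3 = 3" "\<Union>P3 = D1 \<union> b \<union> b'"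
    unfolding P3_def using is_ppc_insert[OF P2(1) D1(1)] card_insert_disjoint_block[of P2 D1] D1 P2
    by (auto simp: X1_def P2_def)
  have P3B: "P3 \<subseteq> \<B>" using P3(1) unfolding is_ppc_def by simp
  have "finite (\<Union>P3)" "card (\<Union>P3) \<le> 3 * k"
    using finite_Union_blocks[OF pk P3B] card_Union_blocks_le[OF pk P3B] P3(2) by (auto simp: mult.commute)
  moreover have "p \<notin> \<Union>P3" unfolding P3(3) using D1(3) b b' by (auto simp: X1_def)
  ultimately obtain D2 where D2: "D2 \<in> \<B>" "p \<in> D2" "D2 \<inter> \<Union>P3 = {}"
    using ex_block_through_avoiding[OF pk] heavy(1) by (meson le_less_trans)
  have "finite P3" unfolding P3_def P2_def by simp
  then have "card (insert D2 P3) = 4"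
    using card_insert_disjoint_block[of P3 D2] D2 P3(2) by auto
  moreover have "is_ppc \<B> (insert D2 P3)"
    using is_ppc_insert[OF P3(1) D2(1,3)] .
  ultimately show False
    using max_ppc_size_is_card_le[OF max] \<open>finite P3\<close> by fastforce
qed

text \<open>Without a common point, every point lies on at most \<open>k\<close> blocks of \<open>\<F>\<close>: they meet a block
  of \<open>\<F>\<close> missing that point in distinct points.\<close>
lemma intersecting_blocks_common_point:
  assumes pk: "is_packing v k \<B>" and "\<F> \<subseteq> \<B>"
    and intersecting: "\<And>b b'. b \<in> \<F> \<Longrightarrow> b' \<in> \<F> \<Longrightarrow> b \<inter> b' \<noteq> {}"
    and large: "k * k < card \<F>"
  shows "\<exists>r. \<forall>b\<in>\<F>. r \<in> b"
proof (rule ccontr)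
  assume no_common: "\<not> ?thesis"
  have fin: "finite \<F>" using assms(2) packing_finite[OF pk] by (rule finite_subset)
  have deg: "card {b\<in>\<F>. x \<in> b} \<le> k" for x
  proof -
    obtain G where G: "G \<in> \<F>" "x \<notin> G" using no_common by blast
    have GB: "G \<in> \<B>" "finite G" "card G = k"
      using G(1) assms(2) packing_block_finite[OF pk] packing_block_card[OF pk] by auto
    have "{b\<in>\<F>. x \<in> b} \<subseteq> (\<Union>y\<in>G. {b\<in>\<B>. x \<in> b \<and> y \<in> b})"
      using intersecting[OF _ G(1)] assms(2) by blast
    then have "card {b\<in>\<F>. x \<in> b} \<le> card (\<Union>y\<in>G. {b\<in>\<B>. x \<in> b \<and> y \<in> b})"
      using packing_finite[OF pk] GB(2) by (intro card_mono) auto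
    also have "\<dots> \<le> (\<Sum>y\<in>G. card {b\<in>\<B>. x \<in> b \<and> y \<in> b})"
      by (rule card_UN_le[OF GB(2)])
    also have "\<dots> \<le> (\<Sum>y\<in>G. 1)"
      using G(2) by (intro sum_mono card_blocks_through_pair_le[OF pk]) auto
    finally show ?thesis using GB(3) by simp
  qed
  obtain E where E: "E \<in> \<F>"
    using large by fastforce
  have EB: "finite E" "card E = k"
    using E assms(2) packing_block_finite[OF pk] packing_block_card[OF pk] by auto
  have "\<F> \<subseteq> (\<Union>x\<in>E. {b\<in>\<F>. x \<in> b})"
    using intersecting[OF E] by blast
  then have "card \<F> \<le> card (\<Union>x\<in>E. {b\<in>\<F>. x \<in> b})"
    using fin EB(1) by (intro card_mono) auto
  also have "\<dots> \<le> (\<Sum>x\<in>E. card {b\<in>\<F>. x \<in> b})"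
    by (rule card_UN_le[OF EB(1)])
  also have "\<dots> \<le> k * k"
    using sum_bounded_above[of E "\<lambda>x. card {b\<in>\<F>. x \<in> b}" k] deg EB(2) by simp
  finally show False using large by simp
qed

lemma le_mult_complement:
  fixes s k :: nat
  assumes "0 < s" "s < k"
  shows "k - 1 \<le> s * (k - s)"
proof -
  obtain u where u: "s = Suc u" using assms(1) gr0_implies_Suc by blast
  obtain t where t: "k = Suc (s + t)" using assms(2) less_iff_Suc_add by blast
  show ?thesis unfolding t u by simp
qed

text \<open>Double counting of the pairs (point of \<open>T\<close> on \<open>b\<close>, point of \<open>b\<close> outside \<open>T\<close>): a block meeting
  \<open>T\<close> in \<open>s\<close> points contributes \<open>s (k - s) \<ge> k - 1\<close> of them, and a point of \<open>T\<close> contributes at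
  most \<open>v - card T\<close>.\<close>
lemma card_le_if_blocks_meet_small_set:
  assumes pk: "is_packing v k \<B>" and T: "T \<subseteq> {..<v}" "card T < k"
    and meets: "\<And>b. b \<in> \<B> \<Longrightarrow> b \<inter> T \<noteq> {}"
  shows "(k - 1) * card \<B> \<le> card T * (v - card T)"
proof -
  have fin: "finite \<B>" "finite T"
    using packing_finite[OF pk] T(1) finite_subset by auto
  have block: "k - 1 \<le> card (b \<inter> T) * card (b - T)" if "b \<in> \<B>" for b
  proof -
    have "finite b" "card b = k"
      using that packing_block_finite[OF pk] packing_block_card[OF pk] by auto
    then have "card (b - T) = k - card (b \<inter> T)"
      by (metis card_Diff_subset_Int finite_Int Int_commute)
    moreover have "0 < card (b \<inter> T)"
      using meets[OF that] \<open>finite b\<close> by auto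
    moreover have "card (b \<inter> T) < k"
      using card_mono[OF fin(2), of "b \<inter> T"] T(2) by auto
    ultimately show ?thesis
      using le_mult_complement by simp
  qed
  have "(k - 1) * card \<B> \<le> (\<Sum>b\<in>\<B>. card (b \<inter> T) * card (b - T))"
    using sum_mono[of \<B> "\<lambda>_. k - 1", OF block] by (simp add: mult.commute)
  also have "\<dots> = (\<Sum>b\<in>\<B>. \<Sum>p\<in>T. if p \<in> b then card (b - T) else 0)"
    using fin(2) by (simp add: sum.If_cases Int_commute)
  also have "\<dots> = (\<Sum>p\<in>T. \<Sum>b\<in>{b\<in>\<B>. p \<in> b}. card (b - T))"
    using fin(1) by (subst sum.swap) (simp add: sum.inter_filter)
  also have "\<dots> \<le> (\<Sum>p\<in>T. card ({..<v} - T))"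
    by (intro sum_mono sum_card_Diff_blocks_through_le[OF pk])
  also have "\<dots> = card T * (v - card T)"
    using T(1) fin(2) by (simp add: card_Diff_subset)
  finally show ?thesis .
qed

lemma card_le_if_two_heavy_points:
  assumes pk: "is_packing v k \<B>" and "3 < k" and max: "max_ppc_size_is \<B> 3" and "p \<noteq> q"
    and heavy: "3 * k < point_degree \<B> p" "2 * k + 1 < point_degree \<B> q"
  shows "card \<B> \<le> point_degree \<B> p + point_degree \<B> q + k * k \<or> (k - 1) * card \<B> \<le> 3 * (v - 3)"
proof -
  define \<F> where "\<F> = {b\<in>\<B>. p \<notin> b \<and> q \<notin> b}"
  have "\<B> = {b\<in>\<B>. p \<in> b} \<union> {b\<in>\<B>. q \<in> b} \<union> \<F>"
    unfolding \<F>_def by auto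
  then have "card \<B> = card ({b\<in>\<B>. p \<in> b} \<union> {b\<in>\<B>. q \<in> b} \<union> \<F>)"
    by (rule arg_cong)
  also have "\<dots> \<le> card ({b\<in>\<B>. p \<in> b} \<union> {b\<in>\<B>. q \<in> b}) + card \<F>"
    by (rule card_Un_le)
  also have "\<dots> \<le> point_degree \<B> p + point_degree \<B> q + card \<F>"
    unfolding point_degree_def using card_Un_le by (rule add_right_mono)
  finally have card_\<B>: "card \<B> \<le> point_degree \<B> p + point_degree \<B> q + card \<F>" .
  show ?thesis
  proof (cases "card \<F> \<le> k * k")
    case True
    then show ?thesis using card_\<B> by simp
  next
    case False
    have "\<F> \<subseteq> \<B>" unfolding \<F>_def by auto
    moreover have "b \<inter> b' \<noteq> {}" if "b \<in> \<F>" "b' \<in> \<F>" for b b'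
      using that blocks_avoiding_heavy_points_intersect[OF pk _ max \<open>p \<noteq> q\<close> heavy] \<open>3 < k\<close>
      unfolding \<F>_def by simp
    ultimately obtain r where r: "\<forall>b\<in>\<F>. r \<in> b"
      using intersecting_blocks_common_point[OF pk] False by (meson not_le)
    obtain b0 where "b0 \<in> \<F>" using False by fastforce
    then have "r < v" "r \<noteq> p" "r \<noteq> q"
      using r packing_block_subset[OF pk] unfolding \<F>_def by auto
    moreover have "p < v" "q < v"
      using heavy point_degree_eq_0[OF pk] by (metis not_le not_less_zero)+
    ultimately have T: "{p, q, r} \<subseteq> {..<v}" "card {p, q, r} = 3"
      using \<open>p \<noteq> q\<close> by auto
    have "b \<inter> {p, q, r} \<noteq> {}" if "b \<in> \<B>" for b
      using that r unfolding \<F>_def by blast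
    then have "(k - 1) * card \<B> \<le> 3 * (v - 3)"
      using card_le_if_blocks_meet_small_set[OF pk T(1)] T(2) \<open>3 < k\<close> by simp
    then show ?thesis ..
  qed
qed

lemma card_le_v_minus_2:
  assumes pk: "is_packing v 4 \<B>" and max: "max_ppc_size_is \<B> 3" and v: "147 \<le> v"
  shows "card \<B> \<le> v - 2"
proof -
  have deg: "3 * point_degree \<B> p \<le> v - 1" for p
    using point_degree_bound[OF pk] by simp
  consider (light) "\<forall>p. point_degree \<B> p \<le> 12"
    | (one_heavy) p where "12 < point_degree \<B> p" "\<forall>q. q \<noteq> p \<longrightarrow> point_degree \<B> q \<le> 9"
    | (two_heavy) p q where "p \<noteq> q" "12 < point_degree \<B> p" "9 < point_degree \<B> q"
    by (metis not_le)
  then show ?thesis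
  proof cases
    case light
    then have "card \<B> \<le> 4 * 3 * 12"
      using card_le_max_ppc_size_degree[OF pk _ max, of 12] by simp
    then show ?thesis using v by simp
  next
    case one_heavy
    then have "card \<B> \<le> point_degree \<B> p + 4 * 2 * 9"
      using card_le_if_one_heavy_point[OF pk _ max, of p 9] by simp
    then show ?thesis using deg[of p] v by simp
  next
    case two_heavy
    then have "card \<B> \<le> point_degree \<B> p + point_degree \<B> q + 16 \<or> 3 * card \<B> \<le> 3 * (v - 3)"
      using card_le_if_two_heavy_points[OF pk _ max] by simp
    then show ?thesis using deg[of p] deg[of q] v by linarith
  qed
qed

section \<open>The construction\<close>

lemma mod_eq_iff_int_dvd: "(x::nat) mod m = y mod m \<longleftrightarrow> int m dvd int x - int y"
  by (metis mod_eq_dvd_iff of_nat_eq_iff zmod_int)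

lemma eq_0_if_dvd_abs_less: "(d::int) dvd z \<Longrightarrow> \<bar>z\<bar> < \<bar>d\<bar> \<Longrightarrow> z = 0"
  by (meson dvd_imp_le_int not_le)

lemma eq_if_add_mod_eq:
  assumes "a < m" "c < m" "(a + t) mod m = (c + t) mod (m::nat)"
  shows "a = c"
proof -
  have "int m dvd int a - int c"
    using assms(3) unfolding mod_eq_iff_int_dvd by simp
  then show ?thesis
    using eq_0_if_dvd_abs_less[of "int m" "int a - int c"] assms(1,2) by auto
qed

lemma layer_point_eq_iff:
  assumes "t < m" "t' < (m::nat)"
  shows "3 + l * m + t = 3 + l' * m + t' \<longleftrightarrow> l = l' \<and> t = t'"
proof
  assume eq: "3 + l * m + t = 3 + l' * m + t'"
  then have "(l * m + t) div m = (l' * m + t') div m" by simp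
  then have "l = l'" using assms by simp
  then show "l = l' \<and> t = t'" using eq by simp
qed simp

text \<open>The point \<open>3 + l m + t\<close> stands for \<open>(l, t) \<in> {0, 1, 2} \<times> \<int>/m\<close>; the points \<open>0, 1, 2\<close> are the apexes.
  \<open>slope_block m i a\<close> consists of the apex \<open>i\<close> and the line \<open>t = a + i l\<close>.\<close>
definition slope_block :: "nat \<Rightarrow> nat \<Rightarrow> nat \<Rightarrow> nat set" where
  "slope_block m i a = insert i ((\<lambda>l. 3 + l * m + (a + l * i) mod m) ` {..<3})"

definition slope_blocks :: "nat \<Rightarrow> nat set set" where
  "slope_blocks m = (\<lambda>(i, a). slope_block m i a) ` ({..<3} \<times> {..<m})"

definition apex_block :: "nat \<Rightarrow> nat set" where
  "apex_block m = {0, 1, 2, 3 * m + 3}"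

lemma mem_slope_block:
  "x \<in> slope_block m i a \<longleftrightarrow> x = i \<or> (\<exists>l<3. x = 3 + l * m + (a + l * i) mod m)"
  unfolding slope_block_def by auto

lemma slope_block_apex: "x \<in> slope_block m i a \<Longrightarrow> x < 3 \<Longrightarrow> x = i"
  unfolding mem_slope_block by auto

lemma slope_block_subset: "0 < m \<Longrightarrow> i < 3 \<Longrightarrow> slope_block m i a \<subseteq> {..<3 * m + 3}"
proof
  fix x assume "0 < m" "i < 3" "x \<in> slope_block m i a"
  then consider "x = i" | l where "l < 3" "x = 3 + l * m + (a + l * i) mod m"
    unfolding mem_slope_block by blast
  then show "x \<in> {..<3 * m + 3}"
  proof cases
    case (2 l)
    have "l * m + (a + l * i) mod m < (l + 1) * m"
      using \<open>0 < m\<close> by simp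
    also have "\<dots> \<le> 3 * m" using \<open>l < 3\<close> by (intro mult_right_mono) auto
    finally show ?thesis using 2 by simp
  qed (use \<open>i < 3\<close> in simp)
qed

lemma card_slope_block:
  assumes "0 < m" "i < 3"
  shows "card (slope_block m i a) = 4"
proof -
  let ?f = "\<lambda>l. 3 + l * m + (a + l * i) mod m"
  have "inj_on ?f {..<3}"
    using layer_point_eq_iff assms(1) by (intro inj_onI) simp
  moreover have "i \<notin> ?f ` {..<3}" using assms(2) by auto
  ultimately show ?thesis
    unfolding slope_block_def by (simp add: card_image)
qed

text \<open>The slope differences \<open>(l\<^sub>1 - l\<^sub>2) (i - j)\<close> lie in \<open>{-4..4}\<close>, so they vanish modulo \<open>m \<ge> 5\<close>
  only if \<open>i = j\<close>.\<close>
lemma slope_eq_if_two_layers: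
  fixes m i j a c l\<^sub>1 l\<^sub>2 :: nat
  assumes "5 \<le> m" "i < 3" "j < 3" "l\<^sub>1 < 3" "l\<^sub>2 < 3" "l\<^sub>1 \<noteq> l\<^sub>2"
    and "(a + l\<^sub>1 * i) mod m = (c + l\<^sub>1 * j) mod m" "(a + l\<^sub>2 * i) mod m = (c + l\<^sub>2 * j) mod m"
  shows "i = j"
proof -
  have "int m dvd (int (a + l\<^sub>1 * i) - int (c + l\<^sub>1 * j)) - (int (a + l\<^sub>2 * i) - int (c + l\<^sub>2 * j))"
    using assms(7,8) unfolding mod_eq_iff_int_dvd by (rule dvd_diff)
  also have "(int (a + l\<^sub>1 * i) - int (c + l\<^sub>1 * j)) - (int (a + l\<^sub>2 * i) - int (c + l\<^sub>2 * j))
      = (int l\<^sub>1 - int l\<^sub>2) * (int i - int j)"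
    by (simp add: algebra_simps)
  finally have dvd: "int m dvd (int l\<^sub>1 - int l\<^sub>2) * (int i - int j)" .
  have "\<bar>(int l\<^sub>1 - int l\<^sub>2) * (int i - int j)\<bar> \<le> 2 * 2"
    unfolding abs_mult using assms(2-5) by (intro mult_mono) auto
  then have "(int l\<^sub>1 - int l\<^sub>2) * (int i - int j) = 0"
    using eq_0_if_dvd_abs_less[OF dvd] assms(1) by simp
  then show ?thesis using assms(6) by simp
qed

lemma slope_block_eq:
  assumes m: "5 \<le> m" and "i < 3" "j < 3" "a < m" "c < m" "x \<noteq> y"
    and xy: "{x, y} \<subseteq> slope_block m i a" "{x, y} \<subseteq> slope_block m j c"
  shows "i = j \<and> a = c"
proof -
  have layer: "\<exists>l<3. z = 3 + l * m + (e + l * k) mod m"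
    if "z \<in> slope_block m k e" "3 \<le> z" "k < 3" for z k e
    using that unfolding mem_slope_block by auto
  have same_layer: "l = l' \<and> (a + l * i) mod m = (c + l' * j) mod m"
    if "3 + l * m + (a + l * i) mod m = 3 + l' * m + (c + l' * j) mod m" for l l'
    using that m by (auto simp: layer_point_eq_iff)
  have apex_case: "i = j \<and> a = c"
    if zw: "z < 3" "z \<noteq> w" "{z, w} \<subseteq> slope_block m i a" "{z, w} \<subseteq> slope_block m j c" for z w
  proof -
    have "z = i" "z = j" using zw slope_block_apex by auto
    then have "3 \<le> w" using zw slope_block_apex by force
    then obtain l l' where "l < 3" "w = 3 + l * m + (a + l * i) mod m"
        "w = 3 + l' * m + (c + l' * j) mod m"
      using layer zw(3,4) \<open>i < 3\<close> \<open>j < 3\<close> by (metis insert_subset)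
    then have "(a + l * i) mod m = (c + l * i) mod m"
      using same_layer \<open>z = i\<close> \<open>z = j\<close> by metis
    then show ?thesis using eq_if_add_mod_eq \<open>a < m\<close> \<open>c < m\<close> \<open>z = i\<close> \<open>z = j\<close> by blast
  qed
  consider "x < 3" | "y < 3" | "3 \<le> x" "3 \<le> y" by linarith
  then show ?thesis
  proof cases
    case 1
    then show ?thesis using apex_case[of x y] xy \<open>x \<noteq> y\<close> by simp
  next
    case 2
    then show ?thesis using apex_case[of y x] xy \<open>x \<noteq> y\<close> by (simp add: insert_commute)
  next
    case 3
    obtain l\<^sub>1 l\<^sub>1' where x: "l\<^sub>1 < 3" "x = 3 + l\<^sub>1 * m + (a + l\<^sub>1 * i) mod m"
        "x = 3 + l\<^sub>1' * m + (c + l\<^sub>1' * j) mod m"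
      using layer[of x] xy 3 \<open>i < 3\<close> \<open>j < 3\<close> by (metis insert_subset)
    obtain l\<^sub>2 l\<^sub>2' where y: "l\<^sub>2 < 3" "y = 3 + l\<^sub>2 * m + (a + l\<^sub>2 * i) mod m"
        "y = 3 + l\<^sub>2' * m + (c + l\<^sub>2' * j) mod m"
      using layer[of y] xy 3 \<open>i < 3\<close> \<open>j < 3\<close> by (metis insert_subset)
    have "(a + l\<^sub>1 * i) mod m = (c + l\<^sub>1 * j) mod m" "(a + l\<^sub>2 * i) mod m = (c + l\<^sub>2 * j) mod m"
      using same_layer x(2,3) y(2,3) by metis+
    moreover have "l\<^sub>1 \<noteq> l\<^sub>2" using x(2) y(2) \<open>x \<noteq> y\<close> by auto
    ultimately have "i = j"
      using slope_eq_if_two_layers m \<open>i < 3\<close> \<open>j < 3\<close> x(1) y(1) by blast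
    then show ?thesis
      using eq_if_add_mod_eq \<open>a < m\<close> \<open>c < m\<close> \<open>(a + l\<^sub>1 * i) mod m = (c + l\<^sub>1 * j) mod m\<close> by blast
  qed
qed

lemma mem_slope_blocks: "b \<in> slope_blocks m \<longleftrightarrow> (\<exists>i<3. \<exists>a<m. b = slope_block m i a)"
  unfolding slope_blocks_def by auto

lemma slope_blocks_subset: "0 < m \<Longrightarrow> b \<in> slope_blocks m \<Longrightarrow> b \<subseteq> {..<3 * m + 3}"
  using slope_block_subset unfolding mem_slope_blocks by blast

lemma card_slope_blocks:
  assumes "5 \<le> m"
  shows "card (slope_blocks m) = 3 * m"
proof -
  have "inj_on (\<lambda>(i, a). slope_block m i a) ({..<3} \<times> {..<m})"
  proof (rule inj_onI, clarsimp)
    fix i a j c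
    assume "i < 3" "a < m" "j < 3" "c < m" and eq: "slope_block m i a = slope_block m j c"
    have "3 + a \<in> slope_block m i a"
      unfolding mem_slope_block using \<open>a < m\<close> by (intro disjI2 exI[of _ 0]) simp
    then have "{i, 3 + a} \<subseteq> slope_block m i a"
      by (simp add: mem_slope_block)
    then show "i = j \<and> a = c"
      using slope_block_eq[OF assms \<open>i < 3\<close> \<open>j < 3\<close> \<open>a < m\<close> \<open>c < m\<close>, of i "3 + a"] eq \<open>i < 3\<close> by simp
  qed
  then show ?thesis unfolding slope_blocks_def by (simp add: card_image)
qed

lemma apex_block_notin_slope_blocks: "apex_block m \<notin> slope_blocks m"
proof
  assume "apex_block m \<in> slope_blocks m"
  then obtain i a where "apex_block m = slope_block m i a"
    unfolding mem_slope_blocks by blast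
  then have "0 \<in> slope_block m i a" "1 \<in> slope_block m i a"
    unfolding apex_block_def by blast+
  then have "0 = i" "1 = i"
    using slope_block_apex by auto
  then show False by simp
qed

lemma apex_block_inter_slope_block:
  "0 < m \<Longrightarrow> i < 3 \<Longrightarrow> x \<in> apex_block m \<Longrightarrow> x \<in> slope_block m i a \<Longrightarrow> x = i"
  using slope_block_subset[of m i a] slope_block_apex[of x m i a] unfolding apex_block_def by auto

lemma is_packing_slope_construction:
  assumes m: "5 \<le> m" and sub: "\<B> \<subseteq> insert (apex_block m) (slope_blocks m)" and v: "\<Union>\<B> \<subseteq> {..<v}"
  shows "is_packing v 4 \<B>"
proof -
  have mem: "b = apex_block m \<or> (\<exists>i<3. \<exists>a<m. b = slope_block m i a)" if "b \<in> \<B>" for b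
    using that sub mem_slope_blocks by blast
  show ?thesis
  proof (rule is_packingI)
    fix b assume "b \<in> \<B>"
    then show "b \<subseteq> {..<v}" using v by blast
    show "card b = 4"
      using mem[OF \<open>b \<in> \<B>\<close>] card_slope_block m by (auto simp: apex_block_def)
  next
    fix b b' x y
    assume b: "b \<in> \<B>" "b' \<in> \<B>" and xy: "x \<noteq> y" "{x, y} \<subseteq> b" "{x, y} \<subseteq> b'"
    have apex: False if "{x, y} \<subseteq> apex_block m" "{x, y} \<subseteq> slope_block m i a" "i < 3" for i a
      using that apex_block_inter_slope_block[of m i] m xy(1) by auto
    show "b = b'"
    proof (cases "b = apex_block m \<or> b' = apex_block m")
      case True
      show ?thesis
      proof (rule ccontr)
        assume "b \<noteq> b'"
        then obtain i a where "i < 3" "{x, y} \<subseteq> apex_block m" "{x, y} \<subseteq> slope_block m i a"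
          using True mem[OF b(1)] mem[OF b(2)] xy(2,3) by blast
        then show False using apex by blast
      qed
    next
      case False
      then obtain i a j c where "i < 3" "a < m" "j < 3" "c < m"
          "b = slope_block m i a" "b' = slope_block m j c"
        using mem[OF b(1)] mem[OF b(2)] by blast
      then show ?thesis
        using slope_block_eq[OF m _ _ _ _ xy(1)] xy(2,3) by blast
    qed
  qed
qed

lemma max_ppc_size_is_slope_construction:
  assumes m: "7 \<le> m" and sub: "slope_blocks m \<subseteq> \<B>" "\<B> \<subseteq> insert (apex_block m) (slope_blocks m)"
  shows "max_ppc_size_is \<B> 3"
  unfolding max_ppc_size_is_def
proof
  let ?P = "(\<lambda>i. slope_block m i i) ` {..<3}"
  have "inj_on (\<lambda>i. slope_block m i i) {..<3}"
    by (rule inj_onI) (metis lessThan_iff mem_slope_block slope_block_apex)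
  then have "card ?P = 3" by (simp add: card_image)
  moreover have "?P \<subseteq> \<B>"
  proof -
    have "slope_block m i i \<in> slope_blocks m" if "i < 3" for i
      unfolding mem_slope_blocks using that m by (intro exI[of _ i] conjI) auto
    then show ?thesis using sub(1) by auto
  qed
  moreover have "pairwise disjnt ?P"
  proof -
    have lt3: "{..<3::nat} = {0, 1, 2}" by auto
    have "slope_block m 0 0 = {0, 3, m + 3, 2 * m + 3}"
        "slope_block m 1 1 = {1, 4, m + 5, 2 * m + 6}" "slope_block m 2 2 = {2, 5, m + 7, 2 * m + 9}"
      unfolding slope_block_def lt3 using m by auto
    then show ?thesis
      unfolding lt3 pairwise_def disjnt_def using m by auto
  qed
  ultimately show "\<exists>P. is_ppc \<B> P \<and> card P = 3"
    unfolding is_ppc_def by blast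
next
  have "card P \<le> 3" if "is_ppc \<B> P" for P
  proof -
    have "b \<inter> {0, 1, 2} \<noteq> {}" if "b \<in> P" for b
    proof -
      have "b \<in> insert (apex_block m) (slope_blocks m)"
        using \<open>b \<in> P\<close> \<open>is_ppc \<B> P\<close> sub(2) unfolding is_ppc_def by blast
      then show ?thesis
      proof
        assume "b \<in> slope_blocks m"
        then obtain i a where "i < 3" "b = slope_block m i a"
          unfolding mem_slope_blocks by blast
        then have "i \<in> b \<inter> {0, 1, 2}" by (auto simp: mem_slope_block)
        then show ?thesis by blast
      qed (simp add: apex_block_def)
    qed
    then show ?thesis
      using card_le_if_pairwise_disjnt_meet[of "{0, 1, 2 :: nat}" P] \<open>is_ppc \<B> P\<close>
      unfolding is_ppc_def by simp
  qed
  then show "\<not> (\<exists>P. is_ppc \<B> P \<and> card P = 3 + 1)" by fastforce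
qed

lemma is_packing_slope_blocks:
  assumes "5 \<le> m" "3 * m + 3 \<le> v"
  shows "is_packing v 4 (slope_blocks m)"
proof (rule is_packing_slope_construction[OF assms(1)])
  show "\<Union>(slope_blocks m) \<subseteq> {..<v}"
    using slope_blocks_subset[of m] assms by fastforce
qed auto

lemma is_packing_insert_apex_block:
  assumes "5 \<le> m" "3 * m + 4 \<le> v"
  shows "is_packing v 4 (insert (apex_block m) (slope_blocks m))"
proof (rule is_packing_slope_construction[OF assms(1)])
  show "\<Union>(insert (apex_block m) (slope_blocks m)) \<subseteq> {..<v}"
    using slope_blocks_subset[of m] assms by (fastforce simp: apex_block_def)
qed auto

lemma slope_blocks_card_le_beta:
  assumes "7 \<le> m" "3 * m + 3 \<le> v"
  shows "3 * m \<le> beta 3 v 4"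
proof -
  have "card (slope_blocks m) \<le> beta 3 v 4"
    using is_packing_slope_blocks max_ppc_size_is_slope_construction[OF assms(1)] assms
    by (intro card_le_beta) auto
  then show ?thesis using card_slope_blocks assms(1) by simp
qed

lemma insert_apex_block_card_le_beta:
  assumes "7 \<le> m" "3 * m + 4 \<le> v"
  shows "3 * m + 1 \<le> beta 3 v 4"
proof -
  have "card (insert (apex_block m) (slope_blocks m)) \<le> beta 3 v 4"
    using is_packing_insert_apex_block
      max_ppc_size_is_slope_construction[OF assms(1), of "insert (apex_block m) (slope_blocks m)"] assms
    by (intro card_le_beta) auto
  moreover have "card (insert (apex_block m) (slope_blocks m)) = 3 * m + 1"
    using card_slope_blocks apex_block_notin_slope_blocks assms(1)
    by (simp add: slope_blocks_def)
  ultimately show ?thesis by simp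
qed

theorem theorem4p3:
  fixes v :: nat
  assumes "v \<ge> 147"
  shows "beta 3 v 4 \<le> v - 2 \<and>
         (v mod 3 \<in> {0, 1} \<longrightarrow> beta 3 v 4 \<ge> v - 3) \<and>
         (v mod 3 = 2 \<longrightarrow> beta 3 v 4 \<ge> v - 5)"
proof (intro conjI impI)
  define m where "m = (v - 5) div 3"
  have m: "7 \<le> m" "3 * m + 3 \<le> v" unfolding m_def using assms by auto
  have "is_packing v 4 (slope_blocks m)" "max_ppc_size_is (slope_blocks m) 3"
    using is_packing_slope_blocks max_ppc_size_is_slope_construction m by auto
  then show "beta 3 v 4 \<le> v - 2"
    by (rule beta_le) (rule card_le_v_minus_2[OF _ _ assms])
  show "v - 5 \<le> beta 3 v 4" if "v mod 3 = 2"
  proof -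
    have "v - 5 = 3 * m" unfolding m_def using that by presburger
    then show ?thesis using slope_blocks_card_le_beta[OF m] by simp
  qed
  show "v - 3 \<le> beta 3 v 4" if "v mod 3 \<in> {0, 1}"
  proof (cases "v mod 3 = 0")
    case True
    then have "v - 3 = 3 * ((v - 3) div 3)" "7 \<le> (v - 3) div 3" using assms by presburger+
    then show ?thesis using slope_blocks_card_le_beta[of "(v - 3) div 3" v] by simp
  next
    case False
    then have "v mod 3 = 1" using that by simp
    then have "v - 3 = 3 * ((v - 4) div 3) + 1" "7 \<le> (v - 4) div 3" using assms by presburger+
    then show ?thesis using insert_apex_block_card_le_beta[of "(v - 4) div 3" v] by simp
  qed
qed

end
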